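(* Let $(V_0,\dots,V_d)$ be a partition of $V$, $\mathbf x\in\mathbb R^V$, and $\Delta=(\Delta(0),\dots,\Delta(d))\in\mathbb R^{d+1}$. Let $\tilde{\mathbf x}$ be obtained from $\mathbf x$ by adding $\Delta(i)$ to the potential of every vertex in $V_i$. Then $$\mathcal B(\tilde{\mathbf x})-\mathcal B(\mathbf x)=\mathbf b_H^\top\Delta-\tfrac12\Delta^\top\mathbf L_H\Delta,$$ where $H$ is the contracted graph with vertices $V_0,\dots,V_d$ and resistances $r(V_k,V_l)=\big(\sum_{ij\in\delta(V_k,V_l)}\frac1{r(i,j)}\big)^{-1}$, $\mathbf L_H$ is the Laplacian of $H$, and $b_H(k)=b(V_k)-f(V_k)$ for $k=0,\dots,d$. In particular, the $\Delta$ maximizing $\mathcal B(\tilde{\mathbf x})-\mathcal B(\mathbf x)$ is given by a solution of $\mathbf L_H\Delta=\mathbf b_H$.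
   Context: $G=(V,E)$ is an undirected graph with resistances $r(e)>0$ and a fixed orientation $\vec E$; $\mathbf b\in\mathbb R^V$ with $\sum_ib(i)=0$. $\mathbf L=\sum_{ij\in E}\frac1{r(i,j)}(\mathbf e_i-\mathbf e_j)(\mathbf e_i-\mathbf e_j)^\top$ and $\mathcal B(\mathbf x)=\mathbf b^\top\mathbf x-\frac12\mathbf x^\top\mathbf L\mathbf x$. For $U\subset V$, $b(U)=\sum_{v\in U}b(v)$ and $f(U)=\sum_{ij\in E,\,i\in U,\,j\notin U}\frac{x(i)-x(j)}{r(i,j)}$ is the flow leaving $U$ in the potential-induced flow of $\mathbf x$; $\delta(V_k,V_l)$ is the set of edges with one endpoint in $V_k$ and the other in $V_l$. The Laplacian of a graph with resistances $r_H$ is $\sum_{kl}\frac1{r_H(k,l)}(\mathbf e_k-\mathbf e_l)(\mathbf e_k-\mathbf e_l)^\top$. *)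

theory Defs
  imports Complex_Main
begin

definition lap :: "('v \<times> 'v) set \<Rightarrow> ('v \<times> 'v \<Rightarrow> real) \<Rightarrow> 'v \<Rightarrow> 'v \<Rightarrow> real" where
  "lap E r u w = (\<Sum>(i,j)\<in>E. (1 / r (i,j)) *
      ((if u = i then 1 else 0) - (if u = j then 1 else 0)) *
      ((if w = i then 1 else 0) - (if w = j then 1 else 0)))"

definition energyB :: "'v set \<Rightarrow> ('v \<times> 'v) set \<Rightarrow> ('v \<times> 'v \<Rightarrow> real) \<Rightarrow> ('v \<Rightarrow> real)
    \<Rightarrow> ('v \<Rightarrow> real) \<Rightarrow> real" where
  "energyB V E r b x = (\<Sum>v\<in>V. b v * x v)
      - 1/2 * (\<Sum>u\<in>V. \<Sum>w\<in>V. x u * lap E r u w * x w)"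

text \<open>Flow leaving U in the potential-induced flow of x (each undirected edge with exactly one
  endpoint in U counted once, oriented away from U).\<close>
definition flow_out :: "('v \<times> 'v) set \<Rightarrow> ('v \<times> 'v \<Rightarrow> real) \<Rightarrow> ('v \<Rightarrow> real) \<Rightarrow> 'v set \<Rightarrow> real" where
  "flow_out E r x U = (\<Sum>(i,j)\<in>E.
      (if i \<in> U \<and> j \<notin> U then (x i - x j) / r (i,j)
       else if j \<in> U \<and> i \<notin> U then (x j - x i) / r (i,j) else 0))"

definition cut_edges :: "('v \<times> 'v) set \<Rightarrow> 'v set \<Rightarrow> 'v set \<Rightarrow> ('v \<times> 'v) set" where
  "cut_edges E A B = {(i,j)\<in>E. (i \<in> A \<and> j \<in> B) \<or> (i \<in> B \<and> j \<in> A)}"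

definition resH :: "('v \<times> 'v) set \<Rightarrow> ('v \<times> 'v \<Rightarrow> real) \<Rightarrow> (nat \<Rightarrow> 'v set) \<Rightarrow> nat \<Rightarrow> nat \<Rightarrow> real" where
  "resH E r P k l = inverse (\<Sum>e\<in>cut_edges E (P k) (P l). 1 / r e)"

text \<open>Laplacian of H: sum over unordered pairs k<l of vertices of H. Pairs with no connecting
  edge have resH = inverse 0 = 0, hence contribute 0 (they are not edges of H).\<close>
definition lapH :: "('v \<times> 'v) set \<Rightarrow> ('v \<times> 'v \<Rightarrow> real) \<Rightarrow> (nat \<Rightarrow> 'v set) \<Rightarrow> nat \<Rightarrow> nat \<Rightarrow> nat \<Rightarrow> real" where
  "lapH E r P d a c = (\<Sum>(k,l)\<in>{(k,l). k < l \<and> l \<le> d}. (1 / resH E r P k l) *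
      ((if a = k then 1 else 0) - (if a = l then 1 else 0)) *
      ((if c = k then 1 else 0) - (if c = l then 1 else 0)))"

definition bH :: "('v \<times> 'v) set \<Rightarrow> ('v \<times> 'v \<Rightarrow> real) \<Rightarrow> ('v \<Rightarrow> real) \<Rightarrow> ('v \<Rightarrow> real)
    \<Rightarrow> (nat \<Rightarrow> 'v set) \<Rightarrow> nat \<Rightarrow> real" where
  "bH E r b x P k = (\<Sum>v\<in>P k. b v) - flow_out E r x (P k)"

definition shift :: "(nat \<Rightarrow> 'v set) \<Rightarrow> nat \<Rightarrow> ('v \<Rightarrow> real) \<Rightarrow> (nat \<Rightarrow> real) \<Rightarrow> 'v \<Rightarrow> real" where
  "shift P d x \<Delta> v = x v + (\<Sum>k\<le>d. if v \<in> P k then \<Delta> k else 0)"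

end

theory Submission
  imports Defs
begin

text \<open>Let \<open>\<delta>\<close> be the potential equal to \<open>\<Delta>(k)\<close> on \<open>V\<^sub>k\<close>, so that the shifted potential is
  \<open>x + \<delta>\<close> and \<open>B(x + \<delta>) - B(x) = b\<^sup>T\<delta> - x\<^sup>TL\<delta> - \<delta>\<^sup>TL\<delta> / 2\<close>. The first term is
  \<open>\<Sum>\<^sub>k b(V\<^sub>k) \<Delta>(k)\<close>, and the second is \<open>\<Sum>\<^sub>k f(V\<^sub>k) \<Delta>(k)\<close> because \<open>x\<^sup>TL\<chi>\<^sub>U = f(U)\<close> for the
  indicator \<open>\<chi>\<^sub>U\<close> of any vertex set \<open>U\<close>. In \<open>\<delta>\<^sup>TL\<delta> = \<Sum>\<^sub>i\<^sub>j (\<delta>(i) - \<delta>(j))\<^sup>2 / r(i,j)\<close> the edges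
  inside a part vanish and the edges between \<open>V\<^sub>k\<close> and \<open>V\<^sub>l\<close> add up to
  \<open>(\<Delta>(k) - \<Delta>(l))\<^sup>2 / r(V\<^sub>k,V\<^sub>l)\<close>, so \<open>\<delta>\<^sup>TL\<delta> = \<Delta>\<^sup>TL\<^sub>H\<Delta>\<close>. The gain is thus a concave quadratic
  in \<open>\<Delta>\<close>, maximal exactly where its gradient \<open>b\<^sub>H - L\<^sub>H\<Delta>\<close> vanishes.\<close>

definition edge_form :: "('v \<times> 'v) set \<Rightarrow> ('v \<times> 'v \<Rightarrow> real) \<Rightarrow> ('v \<Rightarrow> real) \<Rightarrow> ('v \<Rightarrow> real) \<Rightarrow> real" where
  "edge_form S r y z = (\<Sum>(i,j)\<in>S. (y i - y j) * (z i - z j) / r (i,j))"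

lemma edge_form_sym: "edge_form S r y z = edge_form S r z y"
  unfolding edge_form_def by (simp add: mult.commute)

lemma edge_form_add_right:
  "edge_form S r y (\<lambda>v. z v + w v) = edge_form S r y z + edge_form S r y w"
  unfolding edge_form_def
  by (simp add: sum.distrib[symmetric] case_prod_beta add_divide_distrib[symmetric] algebra_simps)

lemma edge_form_add_left:
  "edge_form S r (\<lambda>v. y v + z v) w = edge_form S r y w + edge_form S r z w"
  using edge_form_add_right edge_form_sym by metis

lemma edge_form_sum_right:
  "edge_form S r y (\<lambda>v. \<Sum>k\<in>K. f k v) = (\<Sum>k\<in>K. edge_form S r y (f k))"
  unfolding edge_form_def
  by (simp add: sum_subtractf[symmetric] sum_distrib_left sum_divide_distrib case_prod_beta
      sum.swap[of _ K])

lemma edge_form_indicator_right: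
  "edge_form S r x (\<lambda>v. if v \<in> U then t else 0) = flow_out S r x U * t"
  unfolding edge_form_def flow_out_def sum_distrib_right
  by (intro sum.cong refl) (auto simp: field_simps)

lemma edge_form_nonneg:
  assumes "\<And>e. e \<in> S \<Longrightarrow> 0 \<le> r e"
  shows "0 \<le> edge_form S r y y"
  unfolding edge_form_def using assms by (auto intro!: sum_nonneg divide_nonneg_nonneg)

definition incidence :: "'v \<Rightarrow> 'v \<Rightarrow> 'v \<Rightarrow> real" where
  "incidence i j u = (if u = i then 1 else 0) - (if u = j then 1 else 0)"

lemma sum_mult_incidence:
  assumes "finite I" "i \<in> I" "j \<in> I"
  shows "(\<Sum>u\<in>I. y u * incidence i j u) = y i - y j"
  using assms
  by (simp add: incidence_def right_diff_distrib sum_subtractf if_distrib[of "(*) _"] cong: if_cong)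

lemma lap_eq_sum_incidence: "lap S r u w = (\<Sum>(i,j)\<in>S. incidence i j u * incidence i j w / r (i,j))"
  unfolding lap_def incidence_def by (intro sum.cong refl) auto

lemma lap_quadratic_form:
  assumes "finite I" and "S \<subseteq> I \<times> I"
  shows "(\<Sum>u\<in>I. \<Sum>w\<in>I. y u * lap S r u w * z w) = edge_form S r y z"
proof -
  have "(\<Sum>u\<in>I. \<Sum>w\<in>I. y u * lap S r u w * z w)
      = (\<Sum>(i,j)\<in>S. \<Sum>u\<in>I. \<Sum>w\<in>I. (y u * incidence i j u) * (z w * incidence i j w) / r (i,j))"
    unfolding lap_eq_sum_incidence
    by (simp add: sum_distrib_left sum_distrib_right sum.swap[of _ S] case_prod_beta mult_ac)
  also have "\<dots> = (\<Sum>(i,j)\<in>S.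
      (\<Sum>u\<in>I. y u * incidence i j u) * (\<Sum>w\<in>I. z w * incidence i j w) / r (i,j))"
    by (simp add: sum_product sum_divide_distrib)
  also have "\<dots> = edge_form S r y z"
    unfolding edge_form_def using assms by (intro sum.cong refl) (auto simp: sum_mult_incidence)
  finally show ?thesis .
qed

lemma lap_quadratic_max_iff:
  fixes c D :: "'a \<Rightarrow> real"
  assumes fin: "finite I" and S_sub: "S \<subseteq> I \<times> I" and r_nonneg: "\<And>e. e \<in> S \<Longrightarrow> 0 \<le> r e"
  shows "(\<forall>D'. (\<Sum>k\<in>I. c k * D' k) - 1/2 * (\<Sum>k\<in>I. \<Sum>l\<in>I. D' k * lap S r k l * D' l)
             \<le> (\<Sum>k\<in>I. c k * D k) - 1/2 * (\<Sum>k\<in>I. \<Sum>l\<in>I. D k * lap S r k l * D l))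
       \<longleftrightarrow> (\<forall>k\<in>I. (\<Sum>l\<in>I. lap S r k l * D l) = c k)"
proof -
  define q where "q D' = (\<Sum>k\<in>I. c k * D' k) - 1/2 * edge_form S r D' D'" for D'
  define grad where "grad k = c k - (\<Sum>l\<in>I. lap S r k l * D l)" for k
  have q_eq: "(\<Sum>k\<in>I. c k * D' k) - 1/2 * (\<Sum>k\<in>I. \<Sum>l\<in>I. D' k * lap S r k l * D' l) = q D'" for D'
    unfolding q_def lap_quadratic_form[OF fin S_sub] ..
  have increment: "q (\<lambda>k. D k + z k) - q D = (\<Sum>k\<in>I. z k * grad k) - 1/2 * edge_form S r z z" for z
  proof -
    have "(\<Sum>k\<in>I. z k * (\<Sum>l\<in>I. lap S r k l * D l)) = edge_form S r z D"
      by (simp add: lap_quadratic_form[OF fin S_sub, symmetric] sum_distrib_left mult.assoc)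
    then show ?thesis
      unfolding q_def grad_def edge_form_add_left edge_form_add_right
      by (simp add: edge_form_sym[of S r D z] sum.distrib right_diff_distrib sum_subtractf
          algebra_simps)
  qed
  have edge_form_delta:
    "edge_form S r (\<lambda>l. if l = k then t else 0) (\<lambda>l. if l = k then t else 0) = t * t * lap S r k k"
    if "k \<in> I" for k t
    using that fin
    by (simp add: lap_quadratic_form[OF fin S_sub, symmetric] if_distrib[of "\<lambda>x. x * _"]
        if_distrib[of "\<lambda>x. _ * x"] cong: if_cong)
  have "(\<forall>D'. q D' \<le> q D) \<longleftrightarrow> (\<forall>k\<in>I. grad k = 0)"
  proof
    assume maximal: "\<forall>D'. q D' \<le> q D"
    show "\<forall>k\<in>I. grad k = 0"
    proof (rule ccontr)
      assume "\<not> (\<forall>k\<in>I. grad k = 0)"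
      then obtain k where k: "k \<in> I" "grad k \<noteq> 0" by blast
      define m where "m = lap S r k k"
      \<comment> \<open>dividing by \<open>m + 1\<close> rather than \<open>m\<close> avoids a case split on \<open>m = 0\<close>\<close>
      define t where "t = grad k / (m + 1)"
      have "0 \<le> m"
        using edge_form_delta[OF k(1), of 1]
          edge_form_nonneg[of S r "\<lambda>l. if l = k then 1 else 0", OF r_nonneg]
        unfolding m_def by simp
      have "q (\<lambda>l. D l + (if l = k then t else 0)) - q D = t * grad k - 1/2 * (t * t * m)"
        unfolding increment edge_form_delta[OF k(1)] m_def using fin k(1)
        by (simp add: if_distrib[of "\<lambda>x. x * _"] cong: if_cong)
      also have "\<dots> = grad k ^ 2 * (m + 2) / (2 * (m + 1) ^ 2)"
        using \<open>0 \<le> m\<close> unfolding t_def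
        by (simp add: divide_simps) (simp add: algebra_simps power2_eq_square)
      also have "\<dots> > 0"
        using \<open>0 \<le> m\<close> k(2) by (intro divide_pos_pos mult_pos_pos) auto
      finally show False using maximal by (meson diff_gt_0_iff_gt not_le)
    qed
  next
    assume "\<forall>k\<in>I. grad k = 0"
    then have "q (\<lambda>k. D k + z k) \<le> q D" for z
      using increment[of z] edge_form_nonneg[of S r z, OF r_nonneg] by simp
    then have "q (\<lambda>k. D k + (D' k - D k)) \<le> q D" for D' .
    then show "\<forall>D'. q D' \<le> q D" by simp
  qed
  then show ?thesis unfolding q_eq grad_def by (simp add: eq_commute[of "c _"])
qed

lemma energyB_eq_edge_form:
  assumes "finite V" and "E \<subseteq> V \<times> V"
  shows "energyB V E r b y = (\<Sum>v\<in>V. b v * y v) - 1/2 * edge_form E r y y"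
  unfolding energyB_def lap_quadratic_form[OF assms] ..

lemma energyB_add:
  assumes "finite V" and "E \<subseteq> V \<times> V"
  shows "energyB V E r b (\<lambda>v. x v + y v) - energyB V E r b x
       = (\<Sum>v\<in>V. b v * y v) - edge_form E r x y - 1/2 * edge_form E r y y"
  unfolding energyB_eq_edge_form[OF assms] edge_form_add_left edge_form_add_right
  by (simp add: edge_form_sym[of E r y x] sum.distrib algebra_simps)

definition block_potential :: "(nat \<Rightarrow> 'v set) \<Rightarrow> nat \<Rightarrow> (nat \<Rightarrow> real) \<Rightarrow> 'v \<Rightarrow> real" where
  "block_potential P d \<Delta> v = (\<Sum>k\<le>d. if v \<in> P k then \<Delta> k else 0)"

lemma shift_eq_add_block_potential: "shift P d x \<Delta> = (\<lambda>v. x v + block_potential P d \<Delta> v)"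
  unfolding shift_def block_potential_def ..

lemma block_potential_eq:
  assumes "\<And>k l. k \<le> d \<Longrightarrow> l \<le> d \<Longrightarrow> k \<noteq> l \<Longrightarrow> P k \<inter> P l = {}"
    and "k \<le> d" and "v \<in> P k"
  shows "block_potential P d \<Delta> v = \<Delta> k"
proof -
  have "block_potential P d \<Delta> v = (\<Sum>l\<le>d. if l = k then \<Delta> l else 0)"
    unfolding block_potential_def using assms by (intro sum.cong refl) auto
  then show ?thesis using assms(2) by simp
qed

lemma sum_mult_block_potential:
  assumes "finite V" and "\<And>k. k \<le> d \<Longrightarrow> P k \<subseteq> V"
  shows "(\<Sum>v\<in>V. b v * block_potential P d \<Delta> v) = (\<Sum>k\<le>d. (\<Sum>v\<in>P k. b v) * \<Delta> k)"
proof -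
  have "(\<Sum>v\<in>V. b v * block_potential P d \<Delta> v) = (\<Sum>k\<le>d. \<Sum>v\<in>V \<inter> P k. b v * \<Delta> k)"
    unfolding block_potential_def sum_distrib_left
    using assms(1)
    by (subst sum.swap) (simp add: sum.inter_restrict if_distrib[of "(*) _"] cong: if_cong)
  also have "\<dots> = (\<Sum>k\<le>d. (\<Sum>v\<in>P k. b v) * \<Delta> k)"
    using assms(2) by (intro sum.cong refl) (simp add: Int_absorb1 sum_distrib_right)
  finally show ?thesis .
qed

lemma edge_form_block_potential:
  "edge_form E r x (block_potential P d \<Delta>) = (\<Sum>k\<le>d. flow_out E r x (P k) * \<Delta> k)"
  unfolding block_potential_def edge_form_sum_right edge_form_indicator_right ..

lemma cut_edges_subset: "cut_edges E A B \<subseteq> E"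
  unfolding cut_edges_def by auto

lemma edge_within_part_or_cut:
  fixes P :: "nat \<Rightarrow> 'v set"
  assumes "E \<subseteq> (\<Union>k\<le>d. P k) \<times> (\<Union>k\<le>d. P k)" and "(i,j) \<in> E"
  obtains k where "k \<le> d" "i \<in> P k" "j \<in> P k"
    | k l where "k < l" "l \<le> d" "(i,j) \<in> cut_edges E (P k) (P l)"
proof -
  obtain k l where kl: "k \<le> d" "i \<in> P k" "l \<le> d" "j \<in> P l"
    using assms by blast
  consider "k = l" | "k < l" | "l < k" using linorder_less_linear by blast
  then show thesis
    using that kl assms(2) unfolding cut_edges_def by cases blast+
qed

lemma cut_edges_disjoint:
  fixes P :: "nat \<Rightarrow> 'v set"
  assumes disj: "\<And>k l. k \<le> d \<Longrightarrow> l \<le> d \<Longrightarrow> k \<noteq> l \<Longrightarrow> P k \<inter> P l = {}"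
    and kl: "k < l" "l \<le> d" "k' < l'" "l' \<le> d" and neq: "(k,l) \<noteq> (k',l')"
  shows "cut_edges E (P k) (P l) \<inter> cut_edges E (P k') (P l') = {}"
proof -
  have part_unique: "m = n" if "m \<le> d" "n \<le> d" "v \<in> P m" "v \<in> P n" for m n v
    using disj[of m n] that by blast
  have le: "k \<le> d" "l \<le> d" "k' \<le> d" "l' \<le> d"
    using kl by auto
  have "k = k' \<and> l = l'"
    if "(i,j) \<in> cut_edges E (P k) (P l)" "(i,j) \<in> cut_edges E (P k') (P l')" for i j
  proof -
    from that have "i \<in> P k \<and> j \<in> P l \<or> i \<in> P l \<and> j \<in> P k"
      and "i \<in> P k' \<and> j \<in> P l' \<or> i \<in> P l' \<and> j \<in> P k'"
      unfolding cut_edges_def by auto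
    then show ?thesis
      by (elim disjE conjE)
        (use le kl part_unique in \<open>metis not_less_iff_gr_or_eq order.strict_trans\<close>)+
  qed
  then show ?thesis using neq by auto
qed

lemma sum_cut_edges_block_constant:
  assumes const: "\<And>k v. k \<le> d \<Longrightarrow> v \<in> P k \<Longrightarrow> y v = \<Delta> k"
    and "k \<le> d" "l \<le> d"
  shows "(\<Sum>(i,j)\<in>cut_edges E (P k) (P l). (y i - y j) * (y i - y j) / r (i,j))
       = (\<Delta> k - \<Delta> l) * (\<Delta> k - \<Delta> l) / resH E r P k l"
proof -
  have "(y i - y j) * (y i - y j) / r (i,j) = (\<Delta> k - \<Delta> l) * (\<Delta> k - \<Delta> l) * (1 / r (i,j))"
    if "(i,j) \<in> cut_edges E (P k) (P l)" for i j
    using that assms unfolding cut_edges_def by (auto simp: const) (simp add: ring_distribs)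
  then have "(\<Sum>(i,j)\<in>cut_edges E (P k) (P l). (y i - y j) * (y i - y j) / r (i,j))
      = (\<Sum>e\<in>cut_edges E (P k) (P l). (\<Delta> k - \<Delta> l) * (\<Delta> k - \<Delta> l) * (1 / r e))"
    by (intro sum.cong refl) auto
  also have "\<dots> = (\<Delta> k - \<Delta> l) * (\<Delta> k - \<Delta> l) * (\<Sum>e\<in>cut_edges E (P k) (P l). 1 / r e)"
    by (rule sum_distrib_left[symmetric])
  finally show ?thesis
    unfolding resH_def by (simp add: divide_inverse)
qed

lemma edge_form_contract:
  fixes P :: "nat \<Rightarrow> 'v set"
  assumes finE: "finite E"
    and E_sub: "E \<subseteq> (\<Union>k\<le>d. P k) \<times> (\<Union>k\<le>d. P k)"
    and disj: "\<And>k l. k \<le> d \<Longrightarrow> l \<le> d \<Longrightarrow> k \<noteq> l \<Longrightarrow> P k \<inter> P l = {}"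
    and const: "\<And>k v. k \<le> d \<Longrightarrow> v \<in> P k \<Longrightarrow> y v = \<Delta> k"
  shows "edge_form E r y y = edge_form {(k,l). k < l \<and> l \<le> d} (\<lambda>(k,l). resH E r P k l) \<Delta> \<Delta>"
proof -
  define pairs where "pairs = {(k,l). k < l \<and> l \<le> d}"
  define cut where "cut = (\<lambda>(k,l). cut_edges E (P k) (P l))"
  define F where "F = (\<lambda>(i,j). (y i - y j) * (y i - y j) / r (i,j))"
  have fin_pairs: "finite pairs"
    unfolding pairs_def by (rule finite_subset[of _ "{..d} \<times> {..d}"]) auto
  have cut_sub: "\<Union>(cut ` pairs) \<subseteq> E"
    unfolding cut_def using cut_edges_subset by blast
  have F_within: "F (i,j) = 0" if ij: "(i,j) \<in> E - \<Union>(cut ` pairs)" for i j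
  proof -
    from ij have "(i,j) \<in> E" by simp
    with E_sub show ?thesis
    proof (cases rule: edge_within_part_or_cut)
      case (1 k)
      then show ?thesis unfolding F_def by (simp add: const)
    next
      case (2 k l)
      then show ?thesis using ij unfolding pairs_def cut_def by blast
    qed
  qed
  have F_cut: "sum F (cut (k,l)) = (\<Delta> k - \<Delta> l) * (\<Delta> k - \<Delta> l) / resH E r P k l"
    if "(k,l) \<in> pairs" for k l
    using that unfolding pairs_def cut_def F_def
    by (auto intro!: sum_cut_edges_block_constant[OF const])
  have "edge_form E r y y = sum F E"
    unfolding edge_form_def F_def ..
  also have "\<dots> = sum F (\<Union>(cut ` pairs))"
    using finE cut_sub F_within by (intro sum.mono_neutral_right) auto
  also have "\<dots> = sum (\<lambda>p. sum F (cut p)) pairs"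
    using fin_pairs finE cut_sub cut_edges_disjoint[where d = d and P = P, OF disj]
    unfolding pairs_def cut_def by (intro sum.UNION_disjoint) (auto intro: finite_subset)
  also have "\<dots> = edge_form pairs (\<lambda>(k,l). resH E r P k l) \<Delta> \<Delta>"
    unfolding edge_form_def using F_cut by (intro sum.cong refl) auto
  finally show ?thesis unfolding pairs_def .
qed

lemma lapH_eq_lap: "lapH E r P d = lap {(k,l). k < l \<and> l \<le> d} (\<lambda>(k,l). resH E r P k l)"
  unfolding lapH_def lap_def by (intro ext) (simp add: case_prod_beta)

lemma resH_nonneg:
  assumes "\<And>e. e \<in> E \<Longrightarrow> 0 < r e"
  shows "0 \<le> resH E r P k l"
  unfolding resH_def inverse_nonnegative_iff_nonnegative
proof (intro sum_nonneg)
  fix e assume "e \<in> cut_edges E (P k) (P l)"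
  then have "0 < r e" using assms cut_edges_subset by blast
  then show "0 \<le> 1 / r e" by simp
qed

lemma energyB_shift_diff:
  assumes finV: "finite V" and E_sub: "E \<subseteq> V \<times> V"
    and part_disj: "\<And>k l. k \<le> d \<Longrightarrow> l \<le> d \<Longrightarrow> k \<noteq> l \<Longrightarrow> P k \<inter> P l = {}"
    and part_cover: "(\<Union>k\<le>d. P k) = V"
  shows "energyB V E r b (shift P d x \<Delta>) - energyB V E r b x =
      (\<Sum>k\<le>d. bH E r b x P k * \<Delta> k) - 1/2 * (\<Sum>k\<le>d. \<Sum>l\<le>d. \<Delta> k * lapH E r P d k l * \<Delta> l)"
proof -
  let ?pairs = "{(k,l). k < l \<and> l \<le> d}" and ?rH = "\<lambda>(k,l). resH E r P k l"
    and ?y = "block_potential P d \<Delta>"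
  have pairs_sub: "?pairs \<subseteq> {..d} \<times> {..d}" by auto
  have finE: "finite E" using finV E_sub by (meson finite_SigmaI finite_subset)
  have contract: "edge_form E r ?y ?y = edge_form ?pairs ?rH \<Delta> \<Delta>"
  proof (rule edge_form_contract[OF finE _ part_disj])
    show "E \<subseteq> (\<Union>k\<le>d. P k) \<times> (\<Union>k\<le>d. P k)"
      using E_sub part_cover by simp
    show "\<And>k v. k \<le> d \<Longrightarrow> v \<in> P k \<Longrightarrow> ?y v = \<Delta> k"
      by (rule block_potential_eq[OF part_disj])
  qed
  have parts_sub: "k \<le> d \<Longrightarrow> P k \<subseteq> V" for k
    using part_cover by blast
  have "energyB V E r b (shift P d x \<Delta>) - energyB V E r b x
      = (\<Sum>v\<in>V. b v * ?y v) - edge_form E r x ?y - 1/2 * edge_form E r ?y ?y"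
    unfolding shift_eq_add_block_potential by (rule energyB_add[OF finV E_sub])
  also have "\<dots> = (\<Sum>k\<le>d. (\<Sum>v\<in>P k. b v) * \<Delta> k) - (\<Sum>k\<le>d. flow_out E r x (P k) * \<Delta> k)
      - 1/2 * edge_form ?pairs ?rH \<Delta> \<Delta>"
    unfolding contract
    by (simp only: sum_mult_block_potential[OF finV parts_sub] edge_form_block_potential)
  also have "\<dots> = (\<Sum>k\<le>d. bH E r b x P k * \<Delta> k)
      - 1/2 * (\<Sum>k\<le>d. \<Sum>l\<le>d. \<Delta> k * lapH E r P d k l * \<Delta> l)"
    unfolding bH_def lapH_eq_lap lap_quadratic_form[OF finite_atMost pairs_sub]
    by (simp add: left_diff_distrib sum_subtractf)
  finally show ?thesis .
qed

theorem mainTheorem8: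
  fixes V :: "'v set" and E :: "('v \<times> 'v) set" and r :: "'v \<times> 'v \<Rightarrow> real"
    and b x :: "'v \<Rightarrow> real" and P :: "nat \<Rightarrow> 'v set" and d :: nat and \<Delta> :: "nat \<Rightarrow> real"
  assumes finV: "finite V"
    and E_sub: "E \<subseteq> V \<times> V"
    and noloop: "\<And>i j. (i,j) \<in> E \<Longrightarrow> i \<noteq> j"
    and orient: "\<And>i j. (i,j) \<in> E \<Longrightarrow> (j,i) \<notin> E"
    and rpos: "\<And>e. e \<in> E \<Longrightarrow> r e > 0"
    and bsum: "(\<Sum>v\<in>V. b v) = 0"
    and part_ne: "\<And>k. k \<le> d \<Longrightarrow> P k \<noteq> {}"
    and part_disj: "\<And>k l. k \<le> d \<Longrightarrow> l \<le> d \<Longrightarrow> k \<noteq> l \<Longrightarrow> P k \<inter> P l = {}"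
    and part_cover: "(\<Union>k\<le>d. P k) = V"
  shows "energyB V E r b (shift P d x \<Delta>) - energyB V E r b x =
           (\<Sum>k\<le>d. bH E r b x P k * \<Delta> k)
           - 1/2 * (\<Sum>k\<le>d. \<Sum>l\<le>d. \<Delta> k * lapH E r P d k l * \<Delta> l)
    \<and> ((\<forall>\<Delta>'. energyB V E r b (shift P d x \<Delta>') - energyB V E r b x
              \<le> energyB V E r b (shift P d x \<Delta>) - energyB V E r b x)
       \<longleftrightarrow> (\<forall>k\<le>d. (\<Sum>l\<le>d. lapH E r P d k l * \<Delta> l) = bH E r b x P k))"
proof -
  let ?pairs = "{(k,l). k < l \<and> l \<le> d}" and ?rH = "\<lambda>(k,l). resH E r P k l"
  have pairs_sub: "?pairs \<subseteq> {..d} \<times> {..d}" by auto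
  have rH_nonneg: "0 \<le> ?rH p" for p
    using resH_nonneg[OF rpos] by (simp add: case_prod_beta)
  have gain: "energyB V E r b (shift P d x D) - energyB V E r b x =
      (\<Sum>k\<le>d. bH E r b x P k * D k) - 1/2 * (\<Sum>k\<le>d. \<Sum>l\<le>d. D k * lapH E r P d k l * D l)" for D
    by (rule energyB_shift_diff[OF finV E_sub part_disj part_cover])
  show ?thesis
    unfolding gain lapH_eq_lap
    using lap_quadratic_max_iff[OF finite_atMost pairs_sub,
        where r = ?rH and c = "bH E r b x P" and D = \<Delta>]
      rH_nonneg by (simp add: Ball_def)
qed

end
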